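(* Let $\mathbb{H}$ denote the ring of real quaternions with its usual norm $|\cdot|$, let $B_d(1)=\{x\in\mathbb{H}:|x|<1\}$, and let $S$ be a dense subsemigroup of $(\mathbb{H},+)$ such that $S\cap B_d(1)\setminus\{0\}$ is a subsemigroup of $(B_d(1)\setminus\{0\},\cdot)$. Let $\langle x_n\rangle_{n=1}^\infty$ be a sequence in $S$ such that $\sum_{n=1}^\infty x_n$ converges to $0$, and let $A\subseteq S$ be an IP$^*$ set near $0$ in $S$. Then there exists a sum subsystem $\langle y_n\rangle_{n=1}^\infty$ of $\langle x_n\rangle_{n=1}^\infty$ such that \[FS(\langle y_n\rangle_{n=1}^\infty)\cup FP(\langle y_n\rangle_{n=1}^\infty)\subseteq A.\]
   Context: $FS(\langle y_n\rangle_{n=1}^\infty)=\{\sum_{n\in F}y_n: F\text{ a finite nonempty subset of }\mathbb{N}\}$. $FP(\langle y_n\rangle_{n=1}^\infty)$ is the set of all products of finitely many (at least one) terms of $\langle y_n\rangle_{n=1}^\infty$, taken in any order, with no repetitions (multiplication in $\mathbb{H}$ being noncommutative). A sequence $\langle y_n\rangle_{n=1}^\infty$ is a sum subsystem of $\langle x_n\rangle_{n=1}^\infty$ if there is a sequence $\langle H_n\rangle_{n=1}^\infty$ of nonempty finite subsets of $\mathbb{N}$ with $\max H_n<\min H_{n+1}$ and $y_n=\sum_{t\in H_n}x_t$ for each $n$. A subset $C$ of $S$ is an IP set near $0$ if there is a sequence $\langle z_n\rangle_{n=1}^\infty$ in $S$ with $\sum_{n=1}^\infty z_n$ convergent and $FS(\langle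 z_n\rangle_{n=1}^\infty)\subseteq C$. A subset $D$ of $S$ is an IP$^*$ set near $0$ if for every IP set near $0$ $C\subseteq S$, $C\cap D$ is an IP set near $0$. *)

theory Defs
  imports "HOL-Analysis.Analysis"
begin

text \<open>Real quaternions modelled as real^4 with components (1,i,j,k) at indices 1,2,3,4
  (index 4 of the finite type 4 is the same as 0). The Euclidean norm of real^4 is the
  quaternion norm; addition and topology are the standard ones. Multiplication is
  the Hamilton product.\<close>

type_synonym quat = "real ^ 4"

definition qmult :: "quat \<Rightarrow> quat \<Rightarrow> quat" where
  "qmult x y = (\<chi> n.
     if n = 1 then x$1 * y$1 - x$2 * y$2 - x$3 * y$3 - x$4 * y$4
     else if n = 2 then x$1 * y$2 + x$2 * y$1 + x$3 * y$4 - x$4 * y$3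
     else if n = 3 then x$1 * y$3 - x$2 * y$4 + x$3 * y$1 + x$4 * y$2
     else x$1 * y$4 + x$2 * y$3 - x$3 * y$2 + x$4 * y$1)"

definition qone :: quat where
  "qone = (\<chi> n. if n = 1 then 1 else 0)"

definition qprod_list :: "quat list \<Rightarrow> quat" where
  "qprod_list xs = foldr qmult xs qone"

definition FS :: "(nat \<Rightarrow> 'a::comm_monoid_add) \<Rightarrow> 'a set" where
  "FS y = {sum y F | F. finite F \<and> F \<noteq> {}}"

definition FP :: "(nat \<Rightarrow> quat) \<Rightarrow> quat set" where
  "FP y = {qprod_list (map y l) | l. l \<noteq> [] \<and> distinct l}"

definition sum_subsystem :: "(nat \<Rightarrow> 'a::comm_monoid_add) \<Rightarrow> (nat \<Rightarrow> 'a) \<Rightarrow> bool" where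
  "sum_subsystem y x \<longleftrightarrow> (\<exists>H :: nat \<Rightarrow> nat set.
      (\<forall>n. finite (H n) \<and> H n \<noteq> {}) \<and>
      (\<forall>n. Max (H n) < Min (H (Suc n))) \<and>
      (\<forall>n. y n = sum x (H n)))"

definition IP_near_0 :: "'a::real_normed_vector set \<Rightarrow> 'a set \<Rightarrow> bool" where
  "IP_near_0 S C \<longleftrightarrow> C \<subseteq> S \<and>
     (\<exists>z. (\<forall>n. z n \<in> S) \<and> summable z \<and> FS z \<subseteq> C)"

definition IP_star_near_0 :: "'a::real_normed_vector set \<Rightarrow> 'a set \<Rightarrow> bool" where
  "IP_star_near_0 S D \<longleftrightarrow> D \<subseteq> S \<and>
     (\<forall>C. IP_near_0 S C \<longrightarrow> IP_near_0 S (C \<inter> D))"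

end

theory Submission
  imports Defs
begin

(* If x is eventually 0 then 0 lies in S, hence in A, and the zero sequence is a sum subsystem.
   Otherwise pass to a lacunary subsequence w of x, i.e. |w (n+1)| <= |w n| / 4: its finite sums are
   nonzero, small, and determine their index sets, so an IP set inside FS w \<inter> A regroups into a
   sum subsystem z of x with FS z inside A \<inter> B(1) - {0}.
   For p, q in {1} \<union> (S \<inter> B(1) - {0}) the map t \<mapsto> p t q is linear, injective (the quaternion
   norm is multiplicative) and maps S \<inter> B(1) - {0} into S; pulling IP sets back along it shows that
   {t \<in> S. p t q \<in> A} is again IP* near 0. Intersecting finitely many such sets with the tail sums
   of z, one chooses successive blocks of z whose sums y_k put every product of distinct y's, read as
   p y_k q with k its largest index, into A. *)

section \<open>Quaternion multiplication\<close>

lemma quat_eq_iff: "(a::quat) = b \<longleftrightarrow> a$1 = b$1 \<and> a$2 = b$2 \<and> a$3 = b$3 \<and> a$4 = b$4"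
  by (simp add: vec_eq_iff forall_4)

lemma qmult_nth [simp]:
  "qmult x y $ 1 = x$1 * y$1 - x$2 * y$2 - x$3 * y$3 - x$4 * y$4"
  "qmult x y $ 2 = x$1 * y$2 + x$2 * y$1 + x$3 * y$4 - x$4 * y$3"
  "qmult x y $ 3 = x$1 * y$3 - x$2 * y$4 + x$3 * y$1 + x$4 * y$2"
  "qmult x y $ 4 = x$1 * y$4 + x$2 * y$3 - x$3 * y$2 + x$4 * y$1"
  by (simp_all add: qmult_def)

lemma qone_nth [simp]: "qone$1 = 1" "qone$2 = 0" "qone$3 = 0" "qone$4 = 0"
  by (simp_all add: qone_def)

lemma qmult_assoc: "qmult (qmult a b) c = qmult a (qmult b c)"
  by (simp add: quat_eq_iff algebra_simps)

lemma qmult_qone_left [simp]: "qmult qone a = a"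
  and qmult_qone_right [simp]: "qmult a qone = a"
  by (simp_all add: quat_eq_iff)

lemma qmult_zero_left [simp]: "qmult 0 a = 0"
  by (simp add: quat_eq_iff)

lemma qone_neq_zero [simp]: "qone \<noteq> 0"
  by (simp add: quat_eq_iff)

lemma linear_qmult_left: "linear (qmult p)"
  and linear_qmult_right: "linear (\<lambda>t. qmult t p)"
  by (auto intro!: linearI simp: quat_eq_iff algebra_simps)

lemma norm_quat: "norm (x::quat) = sqrt ((x$1)\<^sup>2 + (x$2)\<^sup>2 + (x$3)\<^sup>2 + (x$4)\<^sup>2)"
  by (simp add: norm_vec_def L2_set_def sum_4)

text \<open>Euler's four-square identity.\<close>
lemma norm_qmult: "norm (qmult a b) = norm a * norm b"
  unfolding norm_quat real_sqrt_mult [symmetric] by (simp add: algebra_simps power2_eq_square)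

lemma qmult_eq_0_iff: "qmult a b = 0 \<longleftrightarrow> a = 0 \<or> b = 0"
  by (metis norm_eq_zero norm_qmult mult_eq_0_iff)

lemma inj_qmult_sandwich:
  assumes "p \<noteq> 0" "q \<noteq> 0" shows "inj (\<lambda>t. qmult p (qmult t q))"
proof -
  have "linear (\<lambda>t. qmult p (qmult t q))"
    using linear_compose[OF linear_qmult_right linear_qmult_left] by (simp add: o_def)
  then show ?thesis
    using assms by (simp add: linear_inj_iff_eq_0 qmult_eq_0_iff)
qed

lemma qprod_list_Nil [simp]: "qprod_list [] = qone"
  and qprod_list_Cons [simp]: "qprod_list (a # xs) = qmult a (qprod_list xs)"
  by (simp_all add: qprod_list_def)

lemma qprod_list_append: "qprod_list (xs @ ys) = qmult (qprod_list xs) (qprod_list ys)"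
  by (induction xs) (simp_all add: qmult_assoc)

section \<open>Finite sums and IP sets near zero\<close>

lemma sum_in_FS: "finite F \<Longrightarrow> F \<noteq> {} \<Longrightarrow> sum y F \<in> FS y"
  unfolding FS_def by blast

lemma FS_subset_add_closed:
  assumes add: "\<forall>a\<in>S. \<forall>b\<in>S. a + b \<in> S" and y: "\<forall>n. y n \<in> S"
  shows "FS y \<subseteq> S"
proof -
  have "sum y F \<in> S" if "finite F" "F \<noteq> {}" for F
    using that by (induction F rule: finite_ne_induct) (simp_all add: y add)
  then show ?thesis unfolding FS_def by blast
qed

lemma FS_comp_inj:
  assumes "inj \<rho>" shows "FS (z \<circ> \<rho>) \<subseteq> FS z"
proof
  fix v assume "v \<in> FS (z \<circ> \<rho>)"
  then obtain F where "finite F" "F \<noteq> {}" "v = sum (z \<circ> \<rho>) F"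
    unfolding FS_def by blast
  moreover have "sum (z \<circ> \<rho>) F = sum z (\<rho> ` F)"
    using assms by (simp add: sum.reindex inj_on_subset)
  ultimately show "v \<in> FS z" by (simp add: sum_in_FS)
qed

lemma FS_const_0 [simp]: "FS (\<lambda>_. 0) = {0}"
  unfolding FS_def by auto

lemma IP_near_0_FS:
  "\<forall>a\<in>S. \<forall>b\<in>S. a + b \<in> S \<Longrightarrow> \<forall>n. z n \<in> S \<Longrightarrow> summable z \<Longrightarrow> IP_near_0 S (FS z)"
  unfolding IP_near_0_def using FS_subset_add_closed by blast

lemma IP_near_0_zero: "0 \<in> S \<Longrightarrow> IP_near_0 S {0}"
  unfolding IP_near_0_def by (intro conjI exI[of _ "\<lambda>_. 0"]) auto

lemma IP_near_0_nonempty: "IP_near_0 S C \<Longrightarrow> C \<noteq> {}"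
  unfolding IP_near_0_def using sum_in_FS[of "{0}"] by blast

lemma IP_near_0_mono: "IP_near_0 S C \<Longrightarrow> C \<subseteq> D \<Longrightarrow> D \<subseteq> S \<Longrightarrow> IP_near_0 S D"
  unfolding IP_near_0_def by blast

lemma IP_star_near_0_subset: "IP_star_near_0 S A \<Longrightarrow> A \<subseteq> S"
  unfolding IP_star_near_0_def by blast

lemma IP_star_near_0_zero: "IP_star_near_0 S A \<Longrightarrow> 0 \<in> S \<Longrightarrow> 0 \<in> A"
  unfolding IP_star_near_0_def using IP_near_0_zero IP_near_0_nonempty by blast

lemma IP_star_near_0_Int:
  "IP_star_near_0 S A \<Longrightarrow> IP_star_near_0 S B \<Longrightarrow> IP_star_near_0 S (A \<inter> B)"
  unfolding IP_star_near_0_def by (metis Int_assoc le_infI1)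

lemma IP_star_near_0_INT:
  assumes "finite I" "\<And>i. i \<in> I \<Longrightarrow> IP_star_near_0 S (D i)"
  shows "IP_star_near_0 S (S \<inter> (\<Inter>i\<in>I. D i))"
  using assms
proof (induction I rule: finite_induct)
  case empty
  then show ?case unfolding IP_star_near_0_def IP_near_0_def by auto
next
  case (insert i I)
  then have "S \<inter> (\<Inter>j\<in>insert i I. D j) = D i \<inter> (S \<inter> (\<Inter>j\<in>I. D j))"
    using IP_star_near_0_subset by fastforce
  then show ?case using insert.IH insert.prems IP_star_near_0_Int by (metis insertI1 insertI2)
qed

section \<open>Sum subsystems\<close>

definition increasing_blocks :: "(nat \<Rightarrow> nat set) \<Rightarrow> bool" where
  "increasing_blocks H \<longleftrightarrow> (\<forall>n. finite (H n) \<and> H n \<noteq> {}) \<and> (\<forall>n. Max (H n) < Min (H (Suc n)))"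

lemma sum_subsystem_iff:
  "sum_subsystem y x \<longleftrightarrow> (\<exists>H. increasing_blocks H \<and> (\<forall>n. y n = sum x (H n)))"
  unfolding sum_subsystem_def increasing_blocks_def by blast

lemma increasing_blocksI:
  assumes "\<And>n. finite (H n)" "\<And>n. H n \<noteq> {}" "\<And>n a b. a \<in> H n \<Longrightarrow> b \<in> H (Suc n) \<Longrightarrow> a < b"
  shows "increasing_blocks H"
  unfolding increasing_blocks_def using assms by simp

lemma increasing_blocks_less:
  assumes H: "increasing_blocks H" and "i < j" "a \<in> H i" "b \<in> H j"
  shows "a < b"
proof -
  have fin: "finite (H n)" "H n \<noteq> {}" and step: "Max (H n) < Min (H (Suc n))" for n
    using H unfolding increasing_blocks_def by auto
  have "Min (H n) < Min (H (Suc n))" for n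
    using Max_ge[OF fin(1) Min_in[OF fin], of n] step[of n] by linarith
  then have "Min (H (Suc i)) \<le> Min (H j)"
    using \<open>i < j\<close> lift_Suc_mono_less[of "\<lambda>n. Min (H n)" "Suc i" j]
    by (cases "Suc i = j") (simp_all add: less_imp_le)
  moreover have "a \<le> Max (H i)" "Min (H j) \<le> b"
    using fin assms(3,4) by simp_all
  ultimately show ?thesis
    using step[of i] by linarith
qed

lemma sum_UN_increasing_blocks:
  assumes H: "increasing_blocks H" and "finite F"
  shows "sum x (\<Union>n\<in>F. H n) = (\<Sum>n\<in>F. sum x (H n))"
proof (rule sum.UNION_disjoint[OF \<open>finite F\<close>])
  show "\<forall>n\<in>F. finite (H n)" using H unfolding increasing_blocks_def by blast
  show "\<forall>i\<in>F. \<forall>j\<in>F. i \<noteq> j \<longrightarrow> H i \<inter> H j = {}"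
    using increasing_blocks_less[OF H] by (metis disjoint_iff less_irrefl linorder_neqE_nat)
qed

lemma sum_subsystem_FS_subset:
  assumes "sum_subsystem y x" shows "FS y \<subseteq> FS x"
proof
  obtain H where H: "increasing_blocks H" "\<And>n. y n = sum x (H n)"
    using assms unfolding sum_subsystem_iff by blast
  fix v assume "v \<in> FS y"
  then obtain F where F: "finite F" "F \<noteq> {}" "v = sum y F" unfolding FS_def by blast
  then have "v = sum x (\<Union>n\<in>F. H n)" by (simp add: sum_UN_increasing_blocks[OF H(1)] H(2))
  moreover have "finite (\<Union>n\<in>F. H n)" "(\<Union>n\<in>F. H n) \<noteq> {}"
    using F H(1) unfolding increasing_blocks_def by auto
  ultimately show "v \<in> FS x" by (simp add: sum_in_FS)
qed

lemma sum_subsystem_trans: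
  assumes "sum_subsystem y z" "sum_subsystem z x" shows "sum_subsystem y x"
proof -
  obtain K where K: "increasing_blocks K" "\<And>n. y n = sum z (K n)"
    using assms(1) unfolding sum_subsystem_iff by blast
  obtain H where H: "increasing_blocks H" "\<And>n. z n = sum x (H n)"
    using assms(2) unfolding sum_subsystem_iff by blast
  have "increasing_blocks (\<lambda>n. \<Union>i\<in>K n. H i)"
  proof (rule increasing_blocksI)
    fix n
    show "finite (\<Union>i\<in>K n. H i)" "(\<Union>i\<in>K n. H i) \<noteq> {}"
      using H(1) K(1) unfolding increasing_blocks_def by auto
    fix a b assume "a \<in> (\<Union>i\<in>K n. H i)" "b \<in> (\<Union>i\<in>K (Suc n). H i)"
    then show "a < b"
      using increasing_blocks_less[OF K(1)] increasing_blocks_less[OF H(1)] by blast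
  qed
  moreover have "y n = sum x (\<Union>i\<in>K n. H i)" for n
    using K(1) unfolding increasing_blocks_def by (simp add: sum_UN_increasing_blocks[OF H(1)] K(2) H(2))
  ultimately show ?thesis unfolding sum_subsystem_iff by blast
qed

lemma sum_subsystem_comp: "strict_mono r \<Longrightarrow> sum_subsystem (x \<circ> r) x"
  unfolding sum_subsystem_def by (rule exI[of _ "\<lambda>n. {r n}"]) (simp add: strict_mono_Suc_iff)

lemma sum_subsystem_eventually_0:
  assumes "\<forall>\<^sub>F n in sequentially. x n = 0"
  shows "sum_subsystem (\<lambda>_. 0) x"
proof -
  obtain N where "\<And>n. n \<ge> N \<Longrightarrow> x n = 0"
    using assms by (auto simp: eventually_sequentially)
  then show ?thesis
    unfolding sum_subsystem_def by (intro exI[of _ "\<lambda>n. {N + n}"]) simp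
qed

lemma summable_subsequence_increasing_blocks:
  fixes u :: "nat \<Rightarrow> 'a::banach"
  assumes lim: "u \<longlonglongrightarrow> 0" and G: "\<And>n. finite (G n)" "\<And>n. G n \<noteq> {}" "disjoint_family G"
  shows "\<exists>\<sigma>. strict_mono \<sigma> \<and> increasing_blocks (G \<circ> \<sigma>) \<and> summable (u \<circ> \<sigma>)"
proof -
  have "inj (\<lambda>n. Min (G n))"
  proof (rule injI)
    fix i j assume "Min (G i) = Min (G j)"
    moreover have "Min (G i) \<in> G i" "Min (G j) \<in> G j" by (simp_all add: G)
    ultimately have "Min (G i) \<in> G i \<inter> G j" by simp
    then show "i = j" using G(3) unfolding disjoint_family_on_def by blast
  qed
  then have "finite ((\<lambda>n. Min (G n)) -` {..M})" for M
    by (simp add: finite_vimageI)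
  then have "finite {n. Min (G n) \<le> M}" for M
    by (simp add: vimage_def)
  then have later: "\<forall>\<^sub>F n in sequentially. M < Min (G n)" for M
    by (simp add: cofinite_eq_sequentially[symmetric] eventually_cofinite not_less)
  have small: "\<forall>\<^sub>F n in sequentially. norm (u n) < \<epsilon>" if "\<epsilon> > 0" for \<epsilon>
    using order_tendstoD(2)[OF tendsto_norm_zero[OF lim] that] .
  have "\<exists>\<sigma>. \<forall>k. norm (u (\<sigma> k)) \<le> (1/2)^k \<and> (\<sigma> k < \<sigma> (Suc k) \<and> Max (G (\<sigma> k)) < Min (G (\<sigma> (Suc k))))"
  proof (rule dependent_nat_choice)
    show "\<exists>n. norm (u n) \<le> (1/2)^0"
      using eventually_happens'[OF sequentially_bot small[of 1]] by (auto intro: less_imp_le)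
  next
    fix n k
    have "\<forall>\<^sub>F n' in sequentially. (n < n' \<and> Max (G n) < Min (G n')) \<and> norm (u n') < (1/2)^Suc k"
      using eventually_gt_at_top[of n] later[of "Max (G n)"] small[of "(1/2)^Suc k"]
      by (simp add: eventually_conj)
    then show "\<exists>n'. norm (u n') \<le> (1/2)^Suc k \<and> (n < n' \<and> Max (G n) < Min (G n'))"
      using eventually_happens'[OF sequentially_bot] less_imp_le by blast
  qed
  then obtain \<sigma> where \<sigma>: "\<And>k. norm (u (\<sigma> k)) \<le> (1/2)^k" "\<And>k. \<sigma> k < \<sigma> (Suc k)"
    "\<And>k. Max (G (\<sigma> k)) < Min (G (\<sigma> (Suc k)))" by blast
  have "summable (u \<circ> \<sigma>)"
    by (rule summable_comparison_test'[where g = "\<lambda>k. (1/2)^k" and N = 0])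
       (simp_all add: \<sigma>(1) summable_geometric)
  then show ?thesis
    using \<sigma> G unfolding increasing_blocks_def strict_mono_Suc_iff by auto
qed

section \<open>Lacunary sequences\<close>

definition lacunary :: "(nat \<Rightarrow> 'a::real_normed_vector) \<Rightarrow> bool" where
  "lacunary w \<longleftrightarrow> (\<forall>n. w n \<noteq> 0 \<and> 4 * norm (w (Suc n)) \<le> norm (w n))"

lemma lacunary_norm_le:
  assumes "lacunary w" shows "norm (w n) \<le> (1/4)^n * norm (w 0)"
proof (induction n)
  case (Suc n)
  have "norm (w (Suc n)) \<le> norm (w n) / 4"
    using assms unfolding lacunary_def by (simp add: field_simps)
  also have "\<dots> \<le> (1/4)^n * norm (w 0) / 4"
    using Suc.IH by simp
  finally show ?case by simp
qed simp

lemma lacunary_norm_le_first: "lacunary w \<Longrightarrow> norm (w n) \<le> norm (w 0)"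
  using lacunary_norm_le[of w n] mult_left_le_one_le[of "norm (w 0)" "(1/4)^n"]
  by (simp add: power_le_one)

lemma lacunary_summable:
  fixes w :: "nat \<Rightarrow> 'a::banach"
  assumes "lacunary w" shows "summable w"
proof (rule summable_comparison_test')
  show "summable (\<lambda>n. (1/4::real)^n * norm (w 0))"
    by (simp add: summable_geometric summable_mult2)
  show "norm (w n) \<le> (1/4)^n * norm (w 0)" if "0 \<le> n" for n
    using lacunary_norm_le[OF assms] .
qed

lemma lacunary_sum_norm_gt:
  assumes w: "lacunary w" and "finite K" "\<And>k. k \<in> K \<Longrightarrow> n < k"
  shows "(\<Sum>k\<in>K. norm (w k)) \<le> norm (w n) / 3"
proof -
  have interval: "(\<Sum>k\<in>{n<..n+d}. norm (w k)) \<le> norm (w n) / 3" for n d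
  proof (induction d arbitrary: n)
    case (Suc d)
    have "{n<..n + Suc d} = insert (Suc n) {Suc n<..Suc n + d}" by auto
    then have "(\<Sum>k\<in>{n<..n + Suc d}. norm (w k)) \<le> norm (w (Suc n)) + norm (w (Suc n)) / 3"
      using Suc.IH[of "Suc n"] by simp
    also have "\<dots> \<le> norm (w n) / 3"
      using w unfolding lacunary_def by (simp add: field_simps)
    finally show ?case .
  qed simp
  have "K \<subseteq> {n<..n + Max K}"
    using assms(2,3) by (auto intro!: trans_le_add2 Max_ge)
  then have "(\<Sum>k\<in>K. norm (w k)) \<le> (\<Sum>k\<in>{n<..n + Max K}. norm (w k))"
    by (intro sum_mono2) auto
  then show ?thesis using interval[of n "Max K"] by linarith
qed

text \<open>Lacunarity makes the terms linearly independent over small integer coefficients: the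
  term of least index with a nonzero coefficient dominates all later ones.\<close>
lemma lacunary_int_combination_eq_0:
  assumes w: "lacunary w" and K: "finite K" and c: "\<And>k. k \<in> K \<Longrightarrow> \<bar>c k\<bar> \<le> 2"
    and s: "(\<Sum>k\<in>K. of_int (c k) *\<^sub>R w k) = 0"
  shows "\<forall>k\<in>K. c k = (0::int)"
proof (rule ccontr)
  define N where "N = {k\<in>K. c k \<noteq> 0}"
  assume "\<not> (\<forall>k\<in>K. c k = 0)"
  then have N: "finite N" "N \<noteq> {}" using K unfolding N_def by auto
  define k0 where "k0 = Min N"
  have k0: "k0 \<in> N" "\<And>k. k \<in> N - {k0} \<Longrightarrow> k0 < k"
    unfolding k0_def using N Min_le[OF N(1)] by (auto intro: order_le_neq_trans)
  have "(\<Sum>k\<in>N. of_int (c k) *\<^sub>R w k) = 0"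
    using s unfolding N_def by (subst sum.mono_neutral_left[OF K]) auto
  then have "of_int (c k0) *\<^sub>R w k0 = - (\<Sum>k\<in>N - {k0}. of_int (c k) *\<^sub>R w k)"
    using sum.remove[OF N(1) k0(1), of "\<lambda>k. of_int (c k) *\<^sub>R w k"]
    by (simp add: eq_neg_iff_add_eq_0)
  then have "norm (of_int (c k0) *\<^sub>R w k0) \<le> (\<Sum>k\<in>N - {k0}. norm (of_int (c k) *\<^sub>R w k))"
    by (simp only: norm_minus_cancel norm_sum)
  then have "\<bar>c k0\<bar> * norm (w k0) \<le> (\<Sum>k\<in>N - {k0}. norm (of_int (c k) *\<^sub>R w k))"
    by simp
  also have "\<dots> \<le> (\<Sum>k\<in>N - {k0}. 2 * norm (w k))"
  proof (intro sum_mono)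
    fix k assume "k \<in> N - {k0}"
    then have "\<bar>real_of_int (c k)\<bar> \<le> 2" using c unfolding N_def by (simp flip: of_int_abs)
    then show "norm (of_int (c k) *\<^sub>R w k) \<le> 2 * norm (w k)" by (simp add: mult_right_mono)
  qed
  also have "\<dots> = 2 * (\<Sum>k\<in>N - {k0}. norm (w k))"
    by (simp add: sum_distrib_left)
  also have "\<dots> \<le> 2 * (norm (w k0) / 3)"
    using lacunary_sum_norm_gt[OF w, of "N - {k0}" k0] N(1) k0(2) by simp
  finally have "\<bar>c k0\<bar> * norm (w k0) \<le> 2 * (norm (w k0) / 3)" .
  moreover have "1 \<le> \<bar>c k0\<bar>" "0 < norm (w k0)"
    using k0(1) w unfolding N_def lacunary_def by auto
  ultimately show False
    using mult_right_mono[of 1 "real_of_int \<bar>c k0\<bar>" "norm (w k0)"] by simp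
qed

lemma lacunary_sum_neq_0:
  assumes "lacunary w" "finite G" "G \<noteq> {}" shows "sum w G \<noteq> 0"
  using lacunary_int_combination_eq_0[OF assms(1,2), of "\<lambda>_. 1"] assms(3) by auto

lemma lacunary_norm_sum_le:
  assumes w: "lacunary w" and "finite G" shows "norm (sum w G) \<le> 4/3 * norm (w 0)"
proof -
  have "norm (sum w G) \<le> (\<Sum>k\<in>insert 0 G. norm (w k))"
    using norm_sum[of w G] sum_mono2[of "insert 0 G" G "\<lambda>k. norm (w k)"] \<open>finite G\<close> by force
  also have "\<dots> \<le> norm (w 0) + norm (w 0) / 3"
    using lacunary_sum_norm_gt[OF w, of "G - {0}" 0] \<open>finite G\<close>
    by (simp add: sum.insert_remove)
  finally show ?thesis by simp
qed

lemma lacunary_sum_disjoint: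
  assumes w: "lacunary w" and fin: "finite P" "finite Q" "finite R"
    and s: "sum w P + sum w Q = sum w R"
  shows "P \<inter> Q = {}"
proof -
  define K where "K = P \<union> Q \<union> R"
  define c :: "nat \<Rightarrow> int" where "c k = of_bool (k \<in> P) + of_bool (k \<in> Q) - of_bool (k \<in> R)" for k
  have expand: "sum w X = (\<Sum>k\<in>K. of_bool (k \<in> X) *\<^sub>R w k)" if "X \<subseteq> K" for X
  proof -
    have "(\<Sum>k\<in>K. of_bool (k \<in> X) *\<^sub>R w k) = (\<Sum>k\<in>K. if k \<in> X then w k else 0)"
      by (rule sum.cong) auto
    also have "\<dots> = sum w (K \<inter> X)"
      using fin unfolding K_def by (simp add: sum.inter_restrict)
    finally have "(\<Sum>k\<in>K. of_bool (k \<in> X) *\<^sub>R w k) = sum w (K \<inter> X)" .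
    then show ?thesis using that by (simp add: Int_absorb1)
  qed
  have "(\<Sum>k\<in>K. of_int (c k) *\<^sub>R w k) = (\<Sum>k\<in>K. of_bool (k \<in> P) *\<^sub>R w k)
      + (\<Sum>k\<in>K. of_bool (k \<in> Q) *\<^sub>R w k) - (\<Sum>k\<in>K. of_bool (k \<in> R) *\<^sub>R w k)"
    unfolding c_def by (simp add: scaleR_left_distrib scaleR_diff_left sum.distrib sum_subtractf)
  also have "\<dots> = sum w P + sum w Q - sum w R"
    using expand[of P] expand[of Q] expand[of R] unfolding K_def by (simp add: le_supI1 le_supI2)
  finally have "(\<Sum>k\<in>K. of_int (c k) *\<^sub>R w k) = 0"
    using s by simp
  moreover have "\<bar>c k\<bar> \<le> 2" for k
    unfolding c_def by (cases "k \<in> P"; cases "k \<in> Q"; cases "k \<in> R") simp_all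
  moreover have "finite K"
    unfolding K_def using fin by simp
  ultimately have c0: "\<forall>k\<in>K. c k = 0"
    using lacunary_int_combination_eq_0[OF w] by blast
  show ?thesis
  proof (rule ccontr)
    assume "P \<inter> Q \<noteq> {}"
    then obtain k where k: "k \<in> P" "k \<in> Q" by blast
    then have "c k = 0" using c0 unfolding K_def by blast
    then show False
      using k unfolding c_def by (cases "k \<in> R") simp_all
  qed
qed

lemma lacunary_subsequence:
  fixes z :: "nat \<Rightarrow> 'a::real_normed_vector"
  assumes lim: "z \<longlonglongrightarrow> 0" and nz: "\<exists>\<^sub>F n in sequentially. z n \<noteq> 0" and "e > 0"
  shows "\<exists>r. strict_mono r \<and> lacunary (z \<circ> r) \<and> norm (z (r 0)) < e"
proof -
  have small: "\<exists>n>M. z n \<noteq> 0 \<and> norm (z n) < \<epsilon>" if "\<epsilon> > 0" for M \<epsilon>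
  proof -
    have "\<forall>\<^sub>F n in sequentially. M < n \<and> norm (z n) < \<epsilon>"
      using order_tendstoD(2)[OF tendsto_norm_zero[OF lim] that] eventually_gt_at_top[of M]
      by (simp add: eventually_conj)
    then show ?thesis using frequently_ex[OF frequently_eventually_frequently[OF nz]] by blast
  qed
  have "\<exists>r. \<forall>k. (z (r k) \<noteq> 0 \<and> norm (z (r k)) < e)
          \<and> (r k < r (Suc k) \<and> 4 * norm (z (r (Suc k))) \<le> norm (z (r k)))"
  proof (rule dependent_nat_choice)
    show "\<exists>n. z n \<noteq> 0 \<and> norm (z n) < e" using small[OF \<open>e > 0\<close>] by blast
  next
    fix n k assume "z n \<noteq> 0 \<and> norm (z n) < e"
    then obtain n' where n': "n < n'" "z n' \<noteq> 0" "norm (z n') < norm (z n) / 4"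
      using small[of "norm (z n) / 4" n] by auto
    moreover have "norm (z n') < e"
      using n'(3) \<open>z n \<noteq> 0 \<and> norm (z n) < e\<close> norm_ge_zero[of "z n'"] by linarith
    ultimately show "\<exists>n'. (z n' \<noteq> 0 \<and> norm (z n') < e) \<and> (n < n' \<and> 4 * norm (z n') \<le> norm (z n))"
      by (intro exI[of _ n']) auto
  qed
  then show ?thesis
    unfolding lacunary_def strict_mono_Suc_iff by auto
qed

lemma lacunary_FS_subset_ball:
  assumes w: "lacunary w" and "norm (w 0) < 3/4 * e"
  shows "FS w \<subseteq> ball 0 e - {0}"
proof
  fix v assume "v \<in> FS w"
  then obtain F where F: "finite F" "F \<noteq> {}" "v = sum w F"
    unfolding FS_def by blast
  have "norm v < e"
    using lacunary_norm_sum_le[OF w F(1)] assms(2) unfolding F(3) by linarith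
  moreover have "v \<noteq> 0"
    using lacunary_sum_neq_0[OF w F(1,2)] F(3) by simp
  ultimately show "v \<in> ball 0 e - {0}" by simp
qed

section \<open>IP sets inside IP* sets\<close>

lemma IP_near_0_lacunary_generator:
  fixes C :: "'a::real_normed_vector set"
  assumes C: "IP_near_0 S C" and "e > 0"
  obtains "0 \<in> C"
  | w where "lacunary w" "\<And>n. w n \<in> S \<inter> ball 0 e - {0}" "FS w \<subseteq> C"
proof -
  obtain z where z: "\<forall>n. z n \<in> S" "summable z" "FS z \<subseteq> C"
    using C unfolding IP_near_0_def by blast
  show ?thesis
  proof (cases "\<forall>\<^sub>F n in sequentially. z n = 0")
    case True
    then obtain N where "z N = 0"
      by (auto simp: eventually_sequentially)
    moreover have "sum z {N} \<in> FS z"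
      by (rule sum_in_FS) simp_all
    ultimately show ?thesis
      using z(3) that(1) by auto
  next
    case False
    then have "\<exists>\<^sub>F n in sequentially. z n \<noteq> 0"
      by (simp add: not_eventually)
    then obtain r where r: "strict_mono r" "lacunary (z \<circ> r)" "norm (z (r 0)) < e"
      using lacunary_subsequence[OF summable_LIMSEQ_zero[OF z(2)] _ \<open>e > 0\<close>] by blast
    have "(z \<circ> r) n \<in> S \<inter> ball 0 e - {0}" for n
    proof -
      have "(z \<circ> r) n \<noteq> 0" "norm ((z \<circ> r) n) < e"
        using r(2,3) lacunary_norm_le_first[OF r(2), of n] unfolding lacunary_def by auto
      then show ?thesis using z(1) by simp
    qed
    moreover have "FS (z \<circ> r) \<subseteq> C"
      using FS_comp_inj[OF strict_mono_imp_inj_on[OF r(1)]] z(3) by blast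
    ultimately show ?thesis
      using that(2)[OF r(2)] by blast
  qed
qed

text \<open>The IP set generated by \<open>f \<circ> w\<close> contains one inside \<open>A\<close>; a linear left inverse of \<open>f\<close>
  carries its generator back to one whose finite sums lie in \<open>FS w\<close>.\<close>
lemma IP_near_0_linear_pullback:
  fixes f g :: "'a::euclidean_space \<Rightarrow> 'a"
  assumes add: "\<forall>a\<in>S. \<forall>b\<in>S. a + b \<in> S" and f: "linear f" and g: "linear g" "g \<circ> f = id"
    and w: "summable w" "\<And>n. f (w n) \<in> S" "FS w \<subseteq> C" "C \<subseteq> S" and A: "IP_star_near_0 S A"
  shows "IP_near_0 S (C \<inter> {t\<in>S. f t \<in> A})"
proof -
  have "summable (\<lambda>n. f (w n))"
    using bounded_linear.summable[OF f[unfolded linear_conv_bounded_linear] w(1)] .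
  then have "IP_near_0 S (FS (\<lambda>n. f (w n)))"
    using IP_near_0_FS[OF add, of "\<lambda>n. f (w n)"] w(2) by blast
  then have "IP_near_0 S (FS (\<lambda>n. f (w n)) \<inter> A)"
    using A unfolding IP_star_near_0_def by blast
  then obtain u where u: "summable u" "FS u \<subseteq> FS (\<lambda>n. f (w n)) \<inter> A"
    unfolding IP_near_0_def by blast
  have pulled_back: "sum (\<lambda>n. g (u n)) F \<in> C \<inter> {t\<in>S. f t \<in> A}" if F: "finite F" "F \<noteq> {}" for F
  proof -
    obtain F' where F': "finite F'" "F' \<noteq> {}" "sum u F = sum (\<lambda>n. f (w n)) F'"
      using u(2) sum_in_FS[OF F, of u] unfolding FS_def by blast
    then have "sum u F = f (sum w F')"
      by (simp add: linear_sum[OF f])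
    moreover have "sum (\<lambda>n. g (u n)) F = g (sum u F)"
      by (simp add: linear_sum[OF g(1)])
    ultimately have "sum (\<lambda>n. g (u n)) F = sum w F'" "f (sum (\<lambda>n. g (u n)) F) = sum u F"
      using pointfree_idE[OF g(2)] by simp_all
    moreover have "sum w F' \<in> C" "sum u F \<in> A"
      using w(3) u(2) sum_in_FS[OF F'(1,2), of w] sum_in_FS[OF F, of u] by blast+
    ultimately show ?thesis
      using w(4) by auto
  qed
  have "FS (\<lambda>n. g (u n)) \<subseteq> C \<inter> {t\<in>S. f t \<in> A}"
    using pulled_back unfolding FS_def by blast
  moreover have "g (u n) \<in> S" for n
    using pulled_back[of "{n}"] by simp
  moreover have "summable (\<lambda>n. g (u n))"
    using bounded_linear.summable[OF g(1)[unfolded linear_conv_bounded_linear] u(1)] .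
  ultimately show ?thesis
    unfolding IP_near_0_def using w(4) by (intro conjI exI[of _ "\<lambda>n. g (u n)"]) auto
qed

lemma IP_star_near_0_linear_preimage:
  fixes f :: "'a::euclidean_space \<Rightarrow> 'a"
  assumes add: "\<forall>a\<in>S. \<forall>b\<in>S. a + b \<in> S" and f: "linear f" "inj f" and "e > 0"
    and fS: "\<And>t. t \<in> S \<inter> ball 0 e - {0} \<Longrightarrow> f t \<in> S" and A: "IP_star_near_0 S A"
  shows "IP_star_near_0 S {t\<in>S. f t \<in> A}"
  unfolding IP_star_near_0_def
proof (intro conjI allI impI)
  show "{t\<in>S. f t \<in> A} \<subseteq> S" by blast
  fix C assume C: "IP_near_0 S C"
  then have CS: "C \<subseteq> S"
    unfolding IP_near_0_def by blast
  from C \<open>e > 0\<close> show "IP_near_0 S (C \<inter> {t\<in>S. f t \<in> A})"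
  proof (cases rule: IP_near_0_lacunary_generator)
    case 1
    then have "0 \<in> S" "{0} \<subseteq> C \<inter> {t\<in>S. f t \<in> A}"
      using CS IP_star_near_0_zero[OF A] linear_0[OF f(1)] by auto
    then show ?thesis
      using IP_near_0_mono[OF IP_near_0_zero] by blast
  next
    case (2 w)
    obtain g where "linear g" "g \<circ> f = id"
      using linear_injective_left_inverse[OF f] by blast
    then show ?thesis
      using IP_near_0_linear_pullback[OF add f(1) _ _ lacunary_summable[OF 2(1)] _ 2(3) CS A] fS 2(2)
      by blast
  qed
qed

text \<open>Lacunarity makes the index sets representing the terms of \<open>u\<close> pairwise disjoint,
  so a fast decaying subsequence of \<open>u\<close> is a sum subsystem of \<open>w\<close>.\<close>
lemma lacunary_FS_subset_sum_subsystem: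
  fixes u w :: "nat \<Rightarrow> 'a::banach"
  assumes w: "lacunary w" and u: "summable u" "FS u \<subseteq> FS w"
  obtains \<sigma> where "strict_mono \<sigma>" "sum_subsystem (u \<circ> \<sigma>) w" "summable (u \<circ> \<sigma>)"
proof -
  have "\<exists>G. finite G \<and> G \<noteq> {} \<and> u n = sum w G" for n
    using u(2) sum_in_FS[of "{n}" u] unfolding FS_def by auto
  then obtain G where G: "\<And>n. finite (G n)" "\<And>n. G n \<noteq> {}" "\<And>n. u n = sum w (G n)"
    by metis
  have "disjoint_family G"
    unfolding disjoint_family_on_def
  proof (intro ballI impI)
    fix i j :: nat assume "i \<noteq> j"
    obtain R where "finite R" "sum u {i, j} = sum w R"
      using u(2) sum_in_FS[of "{i, j}" u] unfolding FS_def by auto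
    then show "G i \<inter> G j = {}"
      using lacunary_sum_disjoint[OF w G(1) G(1)] G(3) \<open>i \<noteq> j\<close> by simp
  qed
  then have "\<exists>\<sigma>. strict_mono \<sigma> \<and> increasing_blocks (G \<circ> \<sigma>) \<and> summable (u \<circ> \<sigma>)"
    by (intro summable_subsequence_increasing_blocks[OF summable_LIMSEQ_zero[OF u(1)]])
       (simp_all add: G)
  then obtain \<sigma> where \<sigma>: "strict_mono \<sigma>" "increasing_blocks (G \<circ> \<sigma>)" "summable (u \<circ> \<sigma>)"
    by blast
  moreover have "sum_subsystem (u \<circ> \<sigma>) w"
    unfolding sum_subsystem_iff using \<sigma>(2) G(3) by auto
  ultimately show ?thesis
    using that by blast
qed

lemma IP_star_near_0_sum_subsystem:
  fixes x :: "nat \<Rightarrow> 'a::banach"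
  assumes add: "\<forall>a\<in>S. \<forall>b\<in>S. a + b \<in> S" and xS: "\<forall>n. x n \<in> S" and x: "summable x"
    and nz: "\<exists>\<^sub>F n in sequentially. x n \<noteq> 0" and A: "IP_star_near_0 S A" and "e > 0"
  shows "\<exists>z. sum_subsystem z x \<and> summable z \<and> FS z \<subseteq> A \<inter> (ball 0 e - {0})"
proof -
  have "3/4 * e > 0" using \<open>e > 0\<close> by simp
  then obtain r where r: "strict_mono r" "lacunary (x \<circ> r)" "norm (x (r 0)) < 3/4 * e"
    using lacunary_subsequence[OF summable_LIMSEQ_zero[OF x] nz] by blast
  define w where "w = x \<circ> r"
  have w: "lacunary w" "sum_subsystem w x" "norm (w 0) < 3/4 * e"
    unfolding w_def using r sum_subsystem_comp[OF r(1)] by simp_all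
  have "IP_near_0 S (FS w)"
    using IP_near_0_FS[OF add] xS lacunary_summable[OF w(1)] unfolding w_def by simp
  then have "IP_near_0 S (FS w \<inter> A)"
    using A unfolding IP_star_near_0_def by blast
  then obtain u where u: "summable u" "FS u \<subseteq> FS w \<inter> A"
    unfolding IP_near_0_def by blast
  have "FS u \<subseteq> FS w"
    using u(2) by blast
  then obtain \<sigma> where \<sigma>: "strict_mono \<sigma>" "sum_subsystem (u \<circ> \<sigma>) w" "summable (u \<circ> \<sigma>)"
    by (rule lacunary_FS_subset_sum_subsystem[OF w(1) u(1)])
  have "FS (u \<circ> \<sigma>) \<subseteq> FS u"
    using FS_comp_inj[OF strict_mono_imp_inj_on[OF \<sigma>(1)]] .
  moreover have "FS (u \<circ> \<sigma>) \<subseteq> FS w"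
    using sum_subsystem_FS_subset[OF \<sigma>(2)] .
  ultimately have "FS (u \<circ> \<sigma>) \<subseteq> A \<inter> (ball 0 e - {0})"
    using u(2) lacunary_FS_subset_ball[OF w(1,3)] by blast
  then show ?thesis
    using sum_subsystem_trans[OF \<sigma>(2) w(2)] \<sigma>(3) by blast
qed

section \<open>Products of block sums\<close>

lemma FP_const_0: "FP (\<lambda>_. 0) = {0}"
proof -
  have "qprod_list (map (\<lambda>_. 0) l) = 0" if "l \<noteq> []" for l :: "nat list"
    using that by (cases l) simp_all
  then show ?thesis
    unfolding FP_def by (auto intro!: exI[of _ "[0]"])
qed

text \<open>\<open>F\<close> is admissible as the \<open>i\<close>-th block after \<open>B 0, \<dots>, B (i - 1)\<close> when its sum, taken as
  the factor of largest index, completes every product of earlier block sums to an element of \<open>A\<close>.\<close>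
definition admissible_block ::
    "quat set \<Rightarrow> (nat \<Rightarrow> quat) \<Rightarrow> (nat \<Rightarrow> nat set) \<Rightarrow> nat \<Rightarrow> nat set \<Rightarrow> bool" where
  "admissible_block A z B i F \<longleftrightarrow> finite F \<and> F \<noteq> {} \<and> (\<forall>j<i. \<forall>a\<in>B j. \<forall>c\<in>F. a < c) \<and>
     (\<forall>l1 l2. distinct l1 \<and> distinct l2 \<and> set l1 \<subseteq> {..<i} \<and> set l2 \<subseteq> {..<i} \<longrightarrow>
        qmult (qprod_list (map (\<lambda>j. sum z (B j)) l1))
          (qmult (sum z F) (qprod_list (map (\<lambda>j. sum z (B j)) l2))) \<in> A)"

lemma admissible_blockD:
  assumes "admissible_block A z B i F"
  shows "finite F" "F \<noteq> {}" "j < i \<Longrightarrow> a \<in> B j \<Longrightarrow> c \<in> F \<Longrightarrow> a < c"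
    and "distinct l1 \<Longrightarrow> distinct l2 \<Longrightarrow> set l1 \<subseteq> {..<i} \<Longrightarrow> set l2 \<subseteq> {..<i} \<Longrightarrow>
      qmult (qprod_list (map (\<lambda>j. sum z (B j)) l1))
        (qmult (sum z F) (qprod_list (map (\<lambda>j. sum z (B j)) l2))) \<in> A"
  using assms unfolding admissible_block_def by simp_all

lemma admissible_block_cong:
  assumes "\<And>j. j < i \<Longrightarrow> B j = B' j"
  shows "admissible_block A z B i F = admissible_block A z B' i F"
proof -
  have map_eq: "map (\<lambda>j. sum z (B j)) l = map (\<lambda>j. sum z (B' j)) l" if "set l \<subseteq> {..<i}" for l
    using that assms by (auto intro!: map_cong)
  show ?thesis
    unfolding admissible_block_def
    by (intro conj_cong refl iff_allI imp_cong) (auto simp: assms map_eq)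
qed

lemma distinct_split_Max:
  fixes l :: "nat list"
  assumes "distinct l" "l \<noteq> []"
  obtains l1 k l2 where "l = l1 @ k # l2" "distinct l1" "distinct l2"
    "set l1 \<subseteq> {..<k}" "set l2 \<subseteq> {..<k}"
proof -
  define k where "k = Max (set l)"
  have "k \<in> set l" unfolding k_def using assms(2) by simp
  then obtain l1 l2 where l: "l = l1 @ k # l2" by (meson split_list)
  then have d: "distinct l1" "distinct l2" "k \<notin> set l1" "k \<notin> set l2"
    using assms(1) by auto
  have "j < k" if "j \<in> set l1 \<union> set l2" for j
  proof -
    have "j \<le> k" unfolding k_def using that l by simp
    moreover have "j \<noteq> k" using that d(3,4) by blast
    ultimately show ?thesis by simp
  qed
  then show ?thesis
    using that[OF l d(1,2)] by blast
qed

locale quat_near_0_semigroup =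
  fixes S :: "quat set"
  assumes add_closed: "\<forall>a\<in>S. \<forall>b\<in>S. a + b \<in> S"
    and mult_closed: "\<forall>a\<in>S \<inter> ball 0 1 - {0}. \<forall>b\<in>S \<inter> ball 0 1 - {0}.
                         qmult a b \<in> S \<inter> ball 0 1 - {0}"
begin

abbreviation small :: "quat set" where
  "small \<equiv> S \<inter> ball 0 1 - {0}"

lemma qprod_list_mem:
  "set xs \<subseteq> small \<Longrightarrow> qprod_list xs \<in> insert qone small"
proof (induction xs)
  case (Cons a xs)
  then show ?case
    using mult_closed by (cases "xs = []") auto
qed simp

lemma IP_star_near_0_qmult_preimage:
  assumes A: "IP_star_near_0 S A" and p: "p \<in> insert qone small" and q: "q \<in> insert qone small"
  shows "IP_star_near_0 S {t\<in>S. qmult p (qmult t q) \<in> A}"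
proof (rule IP_star_near_0_linear_preimage[OF add_closed _ _ _ _ A])
  show "linear (\<lambda>t. qmult p (qmult t q))"
    using linear_compose[OF linear_qmult_right linear_qmult_left] by (simp add: o_def)
  show "inj (\<lambda>t. qmult p (qmult t q))"
    using p q by (intro inj_qmult_sandwich) auto
  fix t assume t: "t \<in> small"
  then have "qmult t q \<in> small"
    using q mult_closed by auto
  then show "qmult p (qmult t q) \<in> S"
    using p mult_closed by auto
qed simp

lemma tail_block_sandwiches_in:
  assumes A: "IP_star_near_0 S A" and z: "summable z" "FS z \<subseteq> A \<inter> (ball 0 1 - {0})"
    and P: "finite P" "P \<subseteq> insert qone small"
  obtains F where "finite F" "F \<noteq> {}" "F \<subseteq> {m..}"
    "\<And>p q. p \<in> P \<Longrightarrow> q \<in> P \<Longrightarrow> qmult p (qmult (sum z F) q) \<in> A"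
proof -
  define D where "D = S \<inter> (\<Inter>pq\<in>P \<times> P. {t\<in>S. qmult (fst pq) (qmult t (snd pq)) \<in> A})"
  have "z n \<in> S" for n
    using z(2) IP_star_near_0_subset[OF A] sum_in_FS[of "{n}" z] by auto
  then have "IP_near_0 S (FS (\<lambda>n. z (n + m)))"
    using IP_near_0_FS[OF add_closed] z(1) by (simp add: summable_iff_shift)
  moreover have "IP_star_near_0 S D"
    unfolding D_def
  proof (rule IP_star_near_0_INT)
    show "finite (P \<times> P)" using P(1) by simp
    fix pq assume "pq \<in> P \<times> P"
    then have "fst pq \<in> insert qone small" "snd pq \<in> insert qone small"
      using P(2) unfolding mem_Times_iff by blast+
    then show "IP_star_near_0 S {t\<in>S. qmult (fst pq) (qmult t (snd pq)) \<in> A}"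
      by (rule IP_star_near_0_qmult_preimage[OF A])
  qed
  ultimately have "IP_near_0 S (FS (\<lambda>n. z (n + m)) \<inter> D)"
    unfolding IP_star_near_0_def by blast
  then obtain t where t: "t \<in> FS (\<lambda>n. z (n + m))" "t \<in> D"
    using IP_near_0_nonempty by blast
  then obtain F where F: "finite F" "F \<noteq> {}" "t = (\<Sum>n\<in>F. z (n + m))"
    unfolding FS_def by blast
  have "t = sum z ((\<lambda>n. n + m) ` F)"
    using F(3) by (simp add: sum.reindex inj_on_def)
  moreover have "qmult p (qmult t q) \<in> A" if "p \<in> P" "q \<in> P" for p q
    using t(2) that unfolding D_def by force
  moreover have "finite ((\<lambda>n. n + m) ` F)" "(\<lambda>n. n + m) ` F \<noteq> {}" "(\<lambda>n. n + m) ` F \<subseteq> {m..}"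
    using F(1,2) by auto
  ultimately show ?thesis
    using that by blast
qed

lemma admissible_block_exists:
  assumes A: "IP_star_near_0 S A" and z: "summable z" "FS z \<subseteq> A \<inter> (ball 0 1 - {0})"
    and prev: "\<And>j. j < i \<Longrightarrow> admissible_block A z B j (B j)"
  shows "\<exists>F. admissible_block A z B i F"
proof -
  define y where "y j = sum z (B j)" for j
  define L where "L = {l. set l \<subseteq> {..<i} \<and> distinct l}"
  define P where "P = (\<lambda>l. qprod_list (map y l)) ` L"
  have finB: "finite (B j)" "B j \<noteq> {}" if "j < i" for j
    using admissible_blockD(1,2)[OF prev[OF that]] by simp_all
  then have "y j \<in> small" if "j < i" for j
    using that sum_in_FS[of "B j" z] z(2) IP_star_near_0_subset[OF A] unfolding y_def by blast
  then have "qprod_list (map y l) \<in> insert qone small" if "l \<in> L" for l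
    using that unfolding L_def by (intro qprod_list_mem) auto
  then have "P \<subseteq> insert qone small"
    unfolding P_def by (rule image_subsetI)
  moreover have "finite P"
    unfolding P_def L_def by (intro finite_imageI finite_subset_distinct) simp
  moreover obtain m where m: "(\<Union>j<i. B j) \<subseteq> {..<m}"
    using finite_nat_bounded[of "\<Union>j<i. B j"] finB by auto
  ultimately obtain F where F: "finite F" "F \<noteq> {}" "F \<subseteq> {m..}"
    "\<And>p q. p \<in> P \<Longrightarrow> q \<in> P \<Longrightarrow> qmult p (qmult (sum z F) q) \<in> A"
    using tail_block_sandwiches_in[OF A z, of P m] by blast
  have "admissible_block A z B i F"
    unfolding admissible_block_def
  proof (intro conjI allI impI ballI)
    fix j a c assume "j < i" "a \<in> B j" "c \<in> F"
    then have "a < m" "m \<le> c" using m F(3) by auto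
    then show "a < c" by simp
  next
    fix l1 l2 assume "distinct l1 \<and> distinct l2 \<and> set l1 \<subseteq> {..<i} \<and> set l2 \<subseteq> {..<i}"
    then have "qprod_list (map y l1) \<in> P" "qprod_list (map y l2) \<in> P"
      unfolding P_def L_def by simp_all
    then show "qmult (qprod_list (map (\<lambda>j. sum z (B j)) l1))
         (qmult (sum z F) (qprod_list (map (\<lambda>j. sum z (B j)) l2))) \<in> A"
      using F(4) unfolding y_def by simp
  qed (use F in auto)
  then show ?thesis ..
qed

lemma exists_sum_subsystem_FP_subset:
  assumes A: "IP_star_near_0 S A" and z: "summable z" "FS z \<subseteq> A \<inter> (ball 0 1 - {0})"
  shows "\<exists>y. sum_subsystem y z \<and> FP y \<subseteq> A"
proof -
  have "\<exists>B. \<forall>i. admissible_block A z B i (B i)"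
  proof (rule dependent_wellorder_choice)
    fix F :: "nat set" and B B' :: "nat \<Rightarrow> nat set" and i :: nat
    assume "\<And>j. j < i \<Longrightarrow> B j = B' j"
    then show "admissible_block A z B i F = admissible_block A z B' i F"
      by (rule admissible_block_cong)
  next
    fix i :: nat and B assume "\<And>j. j < i \<Longrightarrow> admissible_block A z B j (B j)"
    then show "\<exists>F. admissible_block A z B i F"
      by (rule admissible_block_exists[OF A z])
  qed
  then obtain B where B: "\<And>i. admissible_block A z B i (B i)" by blast
  define y where "y n = sum z (B n)" for n
  have "increasing_blocks B"
  proof (rule increasing_blocksI)
    fix n
    show "finite (B n)" "B n \<noteq> {}"
      using admissible_blockD(1,2)[OF B] .
    show "a < b" if "a \<in> B n" "b \<in> B (Suc n)" for a b
      using admissible_blockD(3)[OF B _ that] by simp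
  qed
  then have "sum_subsystem y z"
    unfolding sum_subsystem_iff y_def by blast
  moreover have "FP y \<subseteq> A"
  proof
    fix v assume "v \<in> FP y"
    then obtain l where l: "distinct l" "l \<noteq> []" "v = qprod_list (map y l)"
      unfolding FP_def by blast
    obtain l1 k l2 where "l = l1 @ k # l2" "distinct l1" "distinct l2"
      "set l1 \<subseteq> {..<k}" "set l2 \<subseteq> {..<k}"
      using l(1,2) by (rule distinct_split_Max)
    then have "qmult (qprod_list (map y l1)) (qmult (y k) (qprod_list (map y l2))) \<in> A"
      unfolding y_def by (intro admissible_blockD(4)[OF B])
    then show "v \<in> A"
      using l(3) \<open>l = l1 @ k # l2\<close> by (simp add: qprod_list_append)
  qed
  ultimately show ?thesis by blast
qed

end

theorem theorem2p5:
  fixes S :: "quat set" and x :: "nat \<Rightarrow> quat" and A :: "quat set"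
  assumes dense: "closure S = UNIV"
    and add_closed: "\<forall>a\<in>S. \<forall>b\<in>S. a + b \<in> S"
    and mult_closed: "\<forall>a\<in>S \<inter> ball 0 1 - {0}. \<forall>b\<in>S \<inter> ball 0 1 - {0}.
                         qmult a b \<in> S \<inter> ball 0 1 - {0}"
    and xS: "\<forall>n. x n \<in> S"
    and xsum: "x sums 0"
    and A: "IP_star_near_0 S A"
  shows "\<exists>y. sum_subsystem y x \<and> FS y \<union> FP y \<subseteq> A"
proof (cases "\<forall>\<^sub>F n in sequentially. x n = 0")
  case True
  then obtain n where "x n = 0"
    by (auto simp: eventually_sequentially)
  then have "0 \<in> A"
    using IP_star_near_0_zero[OF A] xS by metis
  then show ?thesis
    using sum_subsystem_eventually_0[OF True] by (auto simp: FP_const_0)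
next
  case False
  interpret quat_near_0_semigroup S
    using add_closed mult_closed by unfold_locales
  have "\<exists>\<^sub>F n in sequentially. x n \<noteq> 0"
    using False by (simp add: not_eventually)
  then obtain z where z: "sum_subsystem z x" "summable z" "FS z \<subseteq> A \<inter> (ball 0 1 - {0})"
    using IP_star_near_0_sum_subsystem[OF add_closed xS sums_summable[OF xsum] _ A, of 1] by auto
  then obtain y where y: "sum_subsystem y z" "FP y \<subseteq> A"
    using exists_sum_subsystem_FP_subset[OF A] by blast
  then show ?thesis
    using sum_subsystem_trans[OF y(1) z(1)] sum_subsystem_FS_subset[OF y(1)] z(3) by blast
qed

end
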